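(* Let $X$ be a path-connected uniform space with base point $x_0$. Then the uniform structure of $X$ is generated by the end-point projection $\pi_X\colon\widetilde X\to X$ if and only if for each entourage $E$ of $X$ there is an entourage $F$ of $X$ such that for every $x\in X$ any two points of $B(x,F)$ can be joined by a path contained in $B(x,E)$.
   Context: $B(x,E)=\{y:(x,y)\in E\}$; $f(E)=\{(f(x),f(y)):(x,y)\in E\}$. A surjection $f\colon Z\to X$ from a uniform space generates the uniform structure of $X$ if $\{f(E)\}$, $E$ an entourage of $Z$, is a base of the uniform structure of $X$. $\widetilde X$ is the set of homotopy classes rel. end-points of paths in $X$ starting at $x_0$, and $\pi_X([\alpha])=\alpha(1)$. $\widetilde X$ carries the basic uniform structure with base $\{E^\ast\}$, $E$ an entourage of $X$, where $E^\ast$ is the set of pairs $([\alpha],[\beta])$ such that $\alpha^{-1}\ast\beta$ is homotopic rel. end-points to a path contained in $B(z,E)$ for some $z\in X$. *)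

theory Defs
  imports "HOL-Analysis.Analysis"
begin

text \<open>Entourages of a uniform space (type class uniform_space; the topology is the
uniform one, by the class axiom open_uniformity).\<close>
definition entourage :: "('a::uniform_space \<times> 'a) set \<Rightarrow> bool" where
  "entourage E \<longleftrightarrow> eventually (\<lambda>p. p \<in> E) uniformity"

definition Bent :: "'a \<Rightarrow> ('a \<times> 'a) set \<Rightarrow> 'a set" where
  "Bent x E = {y. (x, y) \<in> E}"

definition pimage :: "('z \<Rightarrow> 'a) \<Rightarrow> ('z \<times> 'z) set \<Rightarrow> ('a \<times> 'a) set" where
  "pimage f E = (\<lambda>(x, y). (f x, f y)) ` E"

text \<open>A surjection f from Z (with entourage family EntZ) generates the uniform
structure of the uniform space 'a: the family of images f(D), D an entourage of Z,
is a base of the uniformity of 'a.\<close>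
definition generates_uniformity ::
  "'z set \<Rightarrow> (('z \<times> 'z) set \<Rightarrow> bool) \<Rightarrow> ('z \<Rightarrow> 'a::uniform_space) \<Rightarrow> bool" where
  "generates_uniformity Z EntZ f \<longleftrightarrow>
     f ` Z = UNIV \<and>
     (\<forall>D. EntZ D \<longrightarrow> entourage (pimage f D)) \<and>
     (\<forall>E. entourage E \<longrightarrow> (\<exists>D. EntZ D \<and> pimage f D \<subseteq> E))"

definition paths_from :: "'a::topological_space \<Rightarrow> (real \<Rightarrow> 'a) set" where
  "paths_from x0 = {g. path g \<and> pathstart g = x0}"

definition Xtilde :: "'a::topological_space \<Rightarrow> (real \<Rightarrow> 'a) set set" where
  "Xtilde x0 = paths_from x0 // {(g, h). homotopic_paths UNIV g h}"

definition endproj :: "(real \<Rightarrow> 'a::topological_space) set \<Rightarrow> 'a" where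
  "endproj A = pathfinish (SOME g. g \<in> A)"

definition Estar :: "'a::topological_space \<Rightarrow> ('a \<times> 'a) set \<Rightarrow>
    ((real \<Rightarrow> 'a) set \<times> (real \<Rightarrow> 'a) set) set" where
  "Estar x0 E = {(A, B). A \<in> Xtilde x0 \<and> B \<in> Xtilde x0 \<and>
     (\<exists>\<alpha>\<in>A. \<exists>\<beta>\<in>B. \<exists>z \<gamma>. path \<gamma> \<and> path_image \<gamma> \<subseteq> Bent z E \<and>
        homotopic_paths UNIV (reversepath \<alpha> +++ \<beta>) \<gamma>)}"

definition tilde_entourage :: "'a::uniform_space \<Rightarrow>
    ((real \<Rightarrow> 'a) set \<times> (real \<Rightarrow> 'a) set) set \<Rightarrow> bool" where
  "tilde_entourage x0 D \<longleftrightarrow> D \<subseteq> Xtilde x0 \<times> Xtilde x0 \<and>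
     (\<exists>E. entourage E \<and> Estar x0 E \<subseteq> D)"

end

theory Submission
  imports Defs
begin

(* Call (y, z) E-ball-joined if some path from y to z lies in a single ball
   B(w, E).  For a path-connected space X the end-point projection maps the basic
   entourage E^* of the universal path space exactly onto the E-ball-joined relation:
   a representative of alpha^-1 * beta that stays in B(w, E) is such a path, and
   conversely a path gamma in B(w, E) arises from the pair ([alpha], [alpha * gamma]).
   Hence pi_X generates the uniformity of X iff every E-ball-joined relation is an
   entourage (the third axiom of "generating" always holds, because ball-joined pairs
   for a "half" entourage H of E lie in E).  The condition of the theorem is a
   re-centred form of the same statement: a path inside B(w, H) starting at x stays
   in B(x, E). *)

section \<open>Homotopy of paths in an arbitrary topological space\<close>

text \<open>Two paths in the unit interval with common end-points are homotopic there (the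
  interval is convex), so composing them with a path P gives homotopic paths.\<close>
lemma homotopic_paths_compose_reparam:
  fixes P :: "real \<Rightarrow> 'a::topological_space"
  assumes "path P" and "path f" "path g"
    and "path_image f \<subseteq> {0..1}" "path_image g \<subseteq> {0..1}"
    and "pathstart g = pathstart f" "pathfinish g = pathfinish f"
  shows "homotopic_paths UNIV (P \<circ> f) (P \<circ> g)"
proof -
  have "homotopic_paths {0..1} f g"
  proof (rule homotopic_paths_linear)
    fix t :: real assume "t \<in> {0..1}"
    then have "f t \<in> {0..1}" "g t \<in> {0..1}"
      using assms(4,5) unfolding path_image_def by blast+
    then show "closed_segment (f t) (g t) \<subseteq> {0..1}"
      by (simp add: closed_segment_subset)
  qed (use assms in auto)
  then show ?thesis
    by (rule homotopic_paths_continuous_image) (use \<open>path P\<close> in \<open>auto simp: path_def\<close>)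
qed

text \<open>The library proves the group
  laws only for normed vector spaces; here both sides are reparametrisations of
  alpha * gamma, so the previous lemma applies.\<close>
lemma homotopic_paths_cancel_left:
  fixes \<alpha> \<gamma> :: "real \<Rightarrow> 'a::topological_space"
  assumes "path \<alpha>" "path \<gamma>" and ends: "pathfinish \<alpha> = pathstart \<gamma>"
  shows "homotopic_paths UNIV (reversepath \<alpha> +++ (\<alpha> +++ \<gamma>)) \<gamma>"
proof -
  define P where "P = \<alpha> +++ \<gamma>"
  define f :: "real \<Rightarrow> real" where "f = reversepath (linepath 0 (1/2)) +++ linepath 0 1"
  define g :: "real \<Rightarrow> real" where "g = linepath (1/2) 1"
  text \<open>P o f runs back along the first half of P and then through all of P; P o g is the
    second half of P, i.e. gamma.\<close>
  have "path P" using assms by (simp add: P_def)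
  have "homotopic_paths UNIV (P \<circ> f) (P \<circ> g)"
    using \<open>path P\<close> by (rule homotopic_paths_compose_reparam)
      (auto simp: f_def g_def path_image_join closed_segment_eq_real_ivl)
  moreover have "homotopic_paths UNIV (reversepath \<alpha> +++ P) (P \<circ> f)"
  proof (rule homotopic_paths_eq)
    fix t :: real assume "t \<in> {0..1}"
    then show "(reversepath \<alpha> +++ P) t = (P \<circ> f) t"
      by (auto simp: f_def P_def joinpaths_def reversepath_def linepath_def algebra_simps
          intro!: arg_cong[where f = \<alpha>])
  qed (use assms in \<open>auto simp: P_def\<close>)
  moreover have "homotopic_paths UNIV (P \<circ> g) \<gamma>"
  proof (rule homotopic_paths_eq)
    show "path (P \<circ> g)" using \<open>homotopic_paths UNIV (P \<circ> f) (P \<circ> g)\<close>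
      by (simp add: homotopic_paths_imp_path)
    fix t :: real assume t: "t \<in> {0..1}"
    have gt: "g t = (1 + t) / 2" by (simp add: g_def linepath_def field_simps)
    show "(P \<circ> g) t = \<gamma> t"
    proof (cases "t = 0")
      case True
      then have "g t = 1 / 2" using gt by simp
      with True ends show ?thesis
        by (simp add: P_def joinpaths_def pathstart_def pathfinish_def mult.commute)
    next
      case False
      then have "\<not> (1 + t) / 2 \<le> 1 / 2" "2 * ((1 + t) / 2) - 1 = t"
        using t by (auto simp: field_simps)
      then show ?thesis by (simp add: gt P_def joinpaths_def)
    qed
  qed auto
  ultimately show ?thesis unfolding P_def by (meson homotopic_paths_trans)
qed

section \<open>Entourages\<close>

lemma entourage_mono: "entourage E \<Longrightarrow> E \<subseteq> F \<Longrightarrow> entourage F"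
  unfolding entourage_def by (auto elim: eventually_mono)

lemma entourage_refl: "entourage E \<Longrightarrow> (x, x) \<in> E"
  unfolding entourage_def using uniformity_refl[of "\<lambda>p. p \<in> E"] by blast

text \<open>H is a half of E if two points H-close to a common centre are E-close to each other
  (for symmetric H this says H o H is contained in E).\<close>
definition half_of :: "('a \<times> 'a) set \<Rightarrow> ('a \<times> 'a) set \<Rightarrow> bool" where
  "half_of H E \<longleftrightarrow> (\<forall>w u v. (w, u) \<in> H \<longrightarrow> (w, v) \<in> H \<longrightarrow> (u, v) \<in> E)"

lemma entourage_half:
  assumes "entourage E"
  obtains H where "entourage H" "half_of H E"
proof -
  obtain D where D: "eventually D uniformity" "\<And>x y z. D (x, y) \<Longrightarrow> D (y, z) \<Longrightarrow> (x, z) \<in> E"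
    using uniformity_transE[of "\<lambda>p. p \<in> E"] assms unfolding entourage_def by blast
  have "eventually (\<lambda>(x, y). D (y, x)) uniformity" using uniformity_sym[OF D(1)] .
  with D(1) have "eventually (\<lambda>p. D p \<and> D (snd p, fst p)) uniformity"
    by (rule eventually_elim2) (auto simp: case_prod_beta)
  then have "entourage {p. D p \<and> D (snd p, fst p)}" unfolding entourage_def by simp
  then show ?thesis by (rule that) (use D(2) in \<open>auto simp: half_of_def\<close>)
qed

section \<open>Pairs joined by a path inside a ball\<close>

definition ball_joined :: "('a::topological_space \<times> 'a) set \<Rightarrow> ('a \<times> 'a) set" where
  "ball_joined E = {(y, z). \<exists>w g. path g \<and> pathstart g = y \<and> pathfinish g = z \<and>
     path_image g \<subseteq> Bent w E}"

lemma ball_joined_recentre: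
  assumes "half_of H E" and "(x, y) \<in> ball_joined H"
  shows "\<exists>g. path g \<and> pathstart g = x \<and> pathfinish g = y \<and> path_image g \<subseteq> Bent x E"
proof -
  obtain w g where g: "path g" "pathstart g = x" "pathfinish g = y" "path_image g \<subseteq> Bent w H"
    using assms(2) unfolding ball_joined_def by blast
  then have "(w, x) \<in> H" using pathstart_in_path_image[of g] by (auto simp: Bent_def)
  then have "path_image g \<subseteq> Bent x E" using g(4) assms(1) by (auto simp: Bent_def half_of_def)
  with g show ?thesis by blast
qed

lemma ball_joined_subset:
  assumes "half_of H E"
  shows "ball_joined H \<subseteq> E"
proof (clarify)
  fix x y assume "(x, y) \<in> ball_joined H"
  then show "(x, y) \<in> E"
    using ball_joined_recentre[OF assms] pathfinish_in_path_image by (fastforce simp: Bent_def)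
qed

lemma uniformly_locally_path_connected_iff:
  "(\<forall>E :: ('a::uniform_space \<times> 'a) set. entourage E \<longrightarrow> (\<exists>F. entourage F \<and>
       (\<forall>x. \<forall>y\<in>Bent x F. \<forall>z\<in>Bent x F. \<exists>g. path g \<and> pathstart g = y \<and>
          pathfinish g = z \<and> path_image g \<subseteq> Bent x E)))
   \<longleftrightarrow> (\<forall>E :: ('a \<times> 'a) set. entourage E \<longrightarrow> entourage (ball_joined E))"
proof (intro iffI allI impI)
  fix E :: "('a \<times> 'a) set"
  assume cond: "\<forall>E :: ('a \<times> 'a) set. entourage E \<longrightarrow> (\<exists>F. entourage F \<and>
       (\<forall>x. \<forall>y\<in>Bent x F. \<forall>z\<in>Bent x F. \<exists>g. path g \<and> pathstart g = y \<and>
          pathfinish g = z \<and> path_image g \<subseteq> Bent x E))" and "entourage E"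
  obtain F where F: "entourage F" and joins: "\<forall>x. \<forall>y\<in>Bent x F. \<forall>z\<in>Bent x F.
      \<exists>g. path g \<and> pathstart g = y \<and> pathfinish g = z \<and> path_image g \<subseteq> Bent x E"
    using cond[rule_format, OF \<open>entourage E\<close>] by (elim exE conjE)
  text \<open>Each pair (x, y) in F is joined inside B(x, E), taking the centre x as start.\<close>
  have "F \<subseteq> ball_joined E"
  proof (clarify)
    fix x y assume "(x, y) \<in> F"
    moreover have "(x, x) \<in> F" using F by (rule entourage_refl)
    ultimately obtain g where "path g" "pathstart g = x" "pathfinish g = y" "path_image g \<subseteq> Bent x E"
      using joins unfolding Bent_def by blast
    then show "(x, y) \<in> ball_joined E" unfolding ball_joined_def by blast
  qed
  with F show "entourage (ball_joined E)" by (rule entourage_mono)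
next
  fix E :: "('a \<times> 'a) set"
  assume ent: "\<forall>E :: ('a \<times> 'a) set. entourage E \<longrightarrow> entourage (ball_joined E)" and "entourage E"
  then obtain H where H: "entourage H" and half: "half_of H E"
    using entourage_half by blast
  text \<open>With F the H-ball-joined relation, y and z are reached from x inside B(x, E).\<close>
  have "\<exists>g. path g \<and> pathstart g = y \<and> pathfinish g = z \<and> path_image g \<subseteq> Bent x E"
    if "y \<in> Bent x (ball_joined H)" "z \<in> Bent x (ball_joined H)" for x y z
  proof -
    have xy: "(x, y) \<in> ball_joined H" and xz: "(x, z) \<in> ball_joined H"
      using that by (simp_all add: Bent_def)
    obtain g where g: "path g" "pathstart g = x" "pathfinish g = y" "path_image g \<subseteq> Bent x E"
      using ball_joined_recentre[OF half xy] by (elim exE conjE)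
    obtain h where h: "path h" "pathstart h = x" "pathfinish h = z" "path_image h \<subseteq> Bent x E"
      using ball_joined_recentre[OF half xz] by (elim exE conjE)
    from g h have "path (reversepath g +++ h)" "pathstart (reversepath g +++ h) = y"
      "pathfinish (reversepath g +++ h) = z" "path_image (reversepath g +++ h) \<subseteq> Bent x E"
      by (auto simp: path_image_join)
    then show ?thesis by blast
  qed
  moreover have "entourage (ball_joined H)" using ent H by blast
  ultimately show "\<exists>F. entourage F \<and> (\<forall>x. \<forall>y\<in>Bent x F. \<forall>z\<in>Bent x F. \<exists>g. path g \<and>
      pathstart g = y \<and> pathfinish g = z \<and> path_image g \<subseteq> Bent x E)"
    by (intro exI[of _ "ball_joined H"] conjI allI ballI)
qed

section \<open>The universal path space and the end-point projection\<close>

definition path_class :: "(real \<Rightarrow> 'a::topological_space) \<Rightarrow> (real \<Rightarrow> 'a) set" where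
  "path_class g = {h. homotopic_paths UNIV g h}"

lemma Xtilde_iff:
  "A \<in> Xtilde x0 \<longleftrightarrow> (\<exists>g. path g \<and> pathstart g = x0 \<and> A = path_class g)"
  unfolding Xtilde_def paths_from_def path_class_def quotient_def by auto

lemma path_class_self: "path g \<Longrightarrow> g \<in> path_class g"
  unfolding path_class_def by simp

lemma endproj_eq:
  assumes "A \<in> Xtilde x0" "h \<in> A"
  shows "endproj A = pathfinish h"
proof -
  obtain g where g: "A = path_class g" using assms(1) by (auto simp: Xtilde_iff)
  have "(SOME k. k \<in> A) \<in> A" using assms(2) by (rule someI[where P = "\<lambda>k. k \<in> A"])
  with assms(2) g have "homotopic_paths UNIV g (SOME k. k \<in> A)" "homotopic_paths UNIV g h"
    by (auto simp: path_class_def)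
  then show ?thesis unfolding endproj_def by (metis homotopic_paths_imp_pathfinish)
qed

lemma endproj_path_class:
  assumes "path g" "pathstart g = x0"
  shows "path_class g \<in> Xtilde x0" "endproj (path_class g) = pathfinish g"
  using assms endproj_eq path_class_self by (auto simp: Xtilde_iff)

lemma endproj_surj:
  assumes "path_connected (UNIV :: 'a::topological_space set)"
  shows "endproj ` Xtilde (x0::'a) = UNIV"
proof (intro subset_antisym subsetI)
  fix x :: 'a
  obtain \<alpha> where "path \<alpha>" "pathstart \<alpha> = x0" "pathfinish \<alpha> = x"
    using assms unfolding path_connected_def by blast
  then show "x \<in> endproj ` Xtilde x0" using endproj_path_class by (metis image_eqI)
qed auto

lemma endproj_Estar:
  assumes "path_connected (UNIV :: 'a::topological_space set)"
  shows "pimage endproj (Estar (x0::'a) E) = ball_joined E"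
proof (intro subset_antisym subsetI)
  fix p assume "p \<in> pimage endproj (Estar x0 E)"
  then obtain A B where p: "p = (endproj A, endproj B)" and "(A, B) \<in> Estar x0 E"
    unfolding pimage_def by auto
  then obtain \<alpha> \<beta> z \<gamma> where AB: "A \<in> Xtilde x0" "B \<in> Xtilde x0" "\<alpha> \<in> A" "\<beta> \<in> B"
    and \<gamma>: "path \<gamma>" "path_image \<gamma> \<subseteq> Bent z E" "homotopic_paths UNIV (reversepath \<alpha> +++ \<beta>) \<gamma>"
    unfolding Estar_def by blast
  have "pathstart \<gamma> = pathfinish \<alpha>" "pathfinish \<gamma> = pathfinish \<beta>"
    using homotopic_paths_imp_pathstart[OF \<gamma>(3)] homotopic_paths_imp_pathfinish[OF \<gamma>(3)] by auto
  then show "p \<in> ball_joined E"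
    using p \<gamma> endproj_eq[OF AB(1,3)] endproj_eq[OF AB(2,4)] unfolding ball_joined_def by auto
next
  fix p assume "p \<in> ball_joined E"
  then obtain z \<gamma> where \<gamma>: "p = (pathstart \<gamma>, pathfinish \<gamma>)" "path \<gamma>" "path_image \<gamma> \<subseteq> Bent z E"
    unfolding ball_joined_def by auto
  obtain \<alpha> where \<alpha>: "path \<alpha>" "pathstart \<alpha> = x0" "pathfinish \<alpha> = pathstart \<gamma>"
    using assms unfolding path_connected_def by blast
  text \<open>The pair ([alpha], [alpha * gamma]) lies in E^* and projects to p.\<close>
  have \<beta>: "path (\<alpha> +++ \<gamma>)" "pathstart (\<alpha> +++ \<gamma>) = x0" "pathfinish (\<alpha> +++ \<gamma>) = pathfinish \<gamma>"
    using \<alpha> \<gamma> by auto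
  have "(path_class \<alpha>, path_class (\<alpha> +++ \<gamma>)) \<in> Estar x0 E"
    using \<alpha> \<beta> \<gamma> homotopic_paths_cancel_left[of \<alpha> \<gamma>] endproj_path_class path_class_self
    unfolding Estar_def by blast
  moreover have "endproj (path_class \<alpha>) = pathstart \<gamma>"
    "endproj (path_class (\<alpha> +++ \<gamma>)) = pathfinish \<gamma>"
    using endproj_path_class[OF \<alpha>(1,2)] endproj_path_class[OF \<beta>(1,2)] \<alpha>(3) \<beta>(3) by auto
  ultimately show "p \<in> pimage endproj (Estar x0 E)" using \<gamma>(1) unfolding pimage_def by force
qed

lemma Estar_tilde_entourage: "entourage E \<Longrightarrow> tilde_entourage x0 (Estar x0 E)"
  unfolding tilde_entourage_def Estar_def by auto

lemma generates_uniformity_iff_ball_joined: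
  assumes pc: "path_connected (UNIV :: 'a::uniform_space set)"
  shows "generates_uniformity (Xtilde (x0::'a)) (tilde_entourage x0) endproj \<longleftrightarrow>
    (\<forall>E :: ('a \<times> 'a) set. entourage E \<longrightarrow> entourage (ball_joined E))"
proof
  assume "generates_uniformity (Xtilde x0) (tilde_entourage x0) endproj"
  then have "entourage (pimage endproj (Estar x0 E))" if "entourage E" for E
    using Estar_tilde_entourage[OF that] unfolding generates_uniformity_def by blast
  then show "\<forall>E :: ('a \<times> 'a) set. entourage E \<longrightarrow> entourage (ball_joined E)"
    unfolding endproj_Estar[OF pc] by blast
next
  assume ent: "\<forall>E :: ('a \<times> 'a) set. entourage E \<longrightarrow> entourage (ball_joined E)"
  text \<open>Images of basic entourages contain ball-joined relations, hence are entourages.\<close>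
  have "entourage (pimage endproj D)" if D: "tilde_entourage x0 D" for D
  proof -
    obtain E :: "('a \<times> 'a) set" where "entourage E" "Estar x0 E \<subseteq> D"
      using D unfolding tilde_entourage_def by blast
    then have "pimage endproj (Estar x0 E) \<subseteq> pimage endproj D"
      unfolding pimage_def by (intro image_mono)
    then have "ball_joined E \<subseteq> pimage endproj D" by (simp only: endproj_Estar[OF pc])
    with ent \<open>entourage E\<close> show ?thesis by (blast intro: entourage_mono)
  qed
  text \<open>Every entourage contains the image of H^* for a half H of it.\<close>
  moreover have "\<exists>D. tilde_entourage x0 D \<and> pimage endproj D \<subseteq> E" if "entourage E" for E
  proof -
    obtain H where "entourage H" "half_of H E"
      using \<open>entourage E\<close> by (rule entourage_half)
    then show ?thesis
      using Estar_tilde_entourage ball_joined_subset endproj_Estar[OF pc] by metis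
  qed
  ultimately show "generates_uniformity (Xtilde x0) (tilde_entourage x0) endproj"
    unfolding generates_uniformity_def using endproj_surj[OF pc] by blast
qed

text \<open>Both sides are equivalent to: the ball-joined relation of every entourage is an
  entourage.\<close>
theorem mainTheorem4:
  fixes x0 :: "'a::uniform_space"
  assumes "path_connected (UNIV :: 'a set)"
  shows "generates_uniformity (Xtilde x0) (tilde_entourage x0) endproj \<longleftrightarrow>
    (\<forall>E :: ('a \<times> 'a) set. entourage E \<longrightarrow> (\<exists>F :: ('a \<times> 'a) set. entourage F \<and>
       (\<forall>x. \<forall>y\<in>Bent x F. \<forall>z\<in>Bent x F. \<exists>g. path g \<and> pathstart g = y \<and>
          pathfinish g = z \<and> path_image g \<subseteq> Bent x E)))"
  unfolding generates_uniformity_iff_ball_joined[OF assms] uniformly_locally_path_connected_iff ..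

end
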